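(* Let $G$ be an abelian group and let $\mathrm{pAut}\,G$ be the set of all partial automorphisms $\varphi$ of $G$ such that $G/\mathrm{Dom}\,\varphi$ and $G/\mathrm{Im}\,\varphi$ are $\aleph_1$-free. Then $\mathrm{pAut}\,G$ is a submonoid of the monoid of all partial automorphisms of $G$ (under composition of partial maps), it contains $1=\mathrm{id}_G$ and $-1=-\mathrm{id}_G$, and it is closed under taking weak inverses: if $\varphi\in\mathrm{pAut}\,G$ then $\varphi^{-1}\in\mathrm{pAut}\,G$.
   Context: A partial automorphism of $G$ is a group isomorphism $\varphi:\mathrm{Dom}\,\varphi\to\mathrm{Im}\,\varphi$ between subgroups of $G$; maps act on the right. The composition of partial automorphisms $\varphi,\psi$ is the partial automorphism $\varphi\psi$ with $\mathrm{Dom}(\varphi\psi)=(\mathrm{Im}\,\varphi\cap\mathrm{Dom}\,\psi)\varphi^{-1}$, $x(\varphi\psi)=(x\varphi)\psi$, and $\mathrm{Im}(\varphi\psi)=(\mathrm{Im}\,\varphi\cap\mathrm{Dom}\,\psi)\psi$. The weak inverse $\varphi^{-1}$ is the inverse isomorphism $\mathrm{Im}\,\varphi\to\mathrm{Dom}\,\varphi$. An abelian group is $\aleph_1$-free if every countable subgroup is free. *)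

theory Defs
  imports "HOL-Algebra.Free_Abelian_Groups" "HOL-Algebra.Coset" "HOL-Library.Countable_Set"
begin

text \<open>Partial maps are represented as maps 'a => 'a option (domain = dom, image = ran).
  Groups are HOL-Algebra structures written multiplicatively.\<close>

definition partial_aut :: "('a, 'b) monoid_scheme \<Rightarrow> ('a \<Rightarrow> 'a option) \<Rightarrow> bool" where
  "partial_aut G \<phi> \<longleftrightarrow> subgroup (dom \<phi>) G \<and> subgroup (ran \<phi>) G \<and> inj_on \<phi> (dom \<phi>) \<and>
     (\<forall>x\<in>dom \<phi>. \<forall>y\<in>dom \<phi>. \<phi> (x \<otimes>\<^bsub>G\<^esub> y) = Some (the (\<phi> x) \<otimes>\<^bsub>G\<^esub> the (\<phi> y)))"

text \<open>Composition, maps acting on the right: x(phi psi) = (x phi) psi.\<close>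
definition pcomp :: "('a \<Rightarrow> 'a option) \<Rightarrow> ('a \<Rightarrow> 'a option) \<Rightarrow> ('a \<Rightarrow> 'a option)" where
  "pcomp \<phi> \<psi> = \<psi> \<circ>\<^sub>m \<phi>"

definition pinv :: "('a \<Rightarrow> 'a option) \<Rightarrow> ('a \<Rightarrow> 'a option)" where
  "pinv \<phi> = (\<lambda>y. if y \<in> ran \<phi> then Some (THE x. \<phi> x = Some y) else None)"

definition pid :: "('a, 'b) monoid_scheme \<Rightarrow> ('a \<Rightarrow> 'a option)" where
  "pid G = (\<lambda>x. if x \<in> carrier G then Some x else None)"

definition pneg :: "('a, 'b) monoid_scheme \<Rightarrow> ('a \<Rightarrow> 'a option)" where
  "pneg G = (\<lambda>x. if x \<in> carrier G then Some (inv\<^bsub>G\<^esub> x) else None)"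

text \<open>Free abelian group: isomorphic to the free abelian group on some basis set.
  The basis is taken in the carrier type, which is no restriction (a basis embeds in the group).\<close>
definition free_abelian :: "('c, 'd) monoid_scheme \<Rightarrow> bool" where
  "free_abelian A \<longleftrightarrow> (\<exists>B :: 'c set. A \<cong> free_Abelian_group B)"

definition aleph1_free :: "('c, 'd) monoid_scheme \<Rightarrow> bool" where
  "aleph1_free A \<longleftrightarrow> (\<forall>S. subgroup S A \<and> countable S \<longrightarrow> free_abelian (A\<lparr>carrier := S\<rparr>))"

definition pAut :: "('a, 'b) monoid_scheme \<Rightarrow> ('a \<Rightarrow> 'a option) set" where
  "pAut G = {\<phi>. partial_aut G \<phi> \<and> aleph1_free (G Mod (dom \<phi>)) \<and> aleph1_free (G Mod (ran \<phi>))}"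

end

theory Submission
  imports Defs
begin

(* Only closure under composition needs an argument. Dom(phi psi) is the kernel of the
   homomorphism Dom phi -> G/Dom psi, x |-> x phi + Dom psi, so Dom phi / Dom(phi psi) embeds in
   the aleph_1-free group G/Dom psi. An extension of an aleph_1-free group by an aleph_1-free
   group is aleph_1-free, because a countable subgroup of it is an extension of a free abelian
   group by a free abelian group, and such an extension splits. Hence G/Dom(phi psi) is
   aleph_1-free, and the image is handled by Im(phi psi) = Dom(psi^-1 phi^-1). *)

section \<open>Subgroups, quotients and internal direct products\<close>

lemma subgroup_generated_of_subgroup:
  assumes "subgroup H G"
  shows "subgroup_generated G H = G\<lparr>carrier := H\<rparr>"
  using subgroup.carrier_subgroup_generated_subgroup[OF assms]
  by (simp add: subgroup_generated_def carrier_subgroup_generated)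

lemma set_mult_restrict_carrier: "set_mult (G\<lparr>carrier := K\<rparr>) = set_mult G"
  by (simp add: set_mult_def fun_eq_iff)

lemma (in comm_group) comm_group_restrict:
  assumes "subgroup H G"
  shows "comm_group (G\<lparr>carrier := H\<rparr>)"
  using abelian_subgroup_generated[OF comm_group_axioms, of H] subgroup_generated_of_subgroup[OF assms]
  by simp

lemma (in group_hom) group_hom_restrict:
  assumes "subgroup S G"
  shows "group_hom (G\<lparr>carrier := S\<rparr>) H h"
  using G.hom_from_subgroup_generated[OF homh, of S] G.subgroup_imp_group[OF assms]
    subgroup_generated_of_subgroup[OF assms]
  by (simp add: group_hom_def group_hom_axioms_def)

lemma iso_restrict_image:
  assumes "h \<in> hom A B" and "inj_on h S" and "S \<subseteq> carrier A"
  shows "h \<in> iso (A\<lparr>carrier := S\<rparr>) (B\<lparr>carrier := h ` S\<rparr>)"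
  using assms by (auto simp: iso_def hom_def bij_betw_def Pi_def subsetD)

lemma (in comm_group) iso_DirProd_subgroups:
  assumes A: "subgroup A G" and B: "subgroup B G"
    and "A \<inter> B \<subseteq> {\<one>}" and "A <#> B = carrier G"
  shows "G \<cong> G\<lparr>carrier := A\<rparr> \<times>\<times> G\<lparr>carrier := B\<rparr>"
proof -
  have "(\<lambda>(x, y). x \<otimes> y) \<in> iso (subgroup_generated G A \<times>\<times> subgroup_generated G B) G"
    using group_disjoint_sum.iso_group_mul[OF _ comm_group_axioms] assms
    by (simp add: group_disjoint_sum_def is_group)
  then have "G\<lparr>carrier := A\<rparr> \<times>\<times> G\<lparr>carrier := B\<rparr> \<cong> G"
    by (simp add: is_isoI subgroup_generated_of_subgroup A B)
  then show ?thesis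
    using DirProd_group[OF subgroup_imp_group subgroup_imp_group, OF A B] by (rule group.iso_sym[rotated])
qed

lemma (in comm_group)
  assumes N: "subgroup N G" and "group H" and g: "g \<in> iso H (G Mod N)" and \<sigma>: "\<sigma> \<in> hom H G"
    and lift: "\<And>z. z \<in> carrier H \<Longrightarrow> N #> \<sigma> z = g z"
  shows Int_section_image: "N \<inter> \<sigma> ` carrier H \<subseteq> {\<one>}"
    and set_mult_section_image: "N <#> \<sigma> ` carrier H = carrier G"
proof -
  interpret normal N G using N by (simp add: normal_iff_subgroup)
  have g_hom: "g \<in> hom H (G Mod N)"
    and g_inj: "inj_on g (carrier H)" and g_onto: "g ` carrier H = carrier (G Mod N)"
    using g by (simp_all add: iso_def bij_betw_def)
  show "N \<inter> \<sigma> ` carrier H \<subseteq> {\<one>}"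
  proof
    fix t assume "t \<in> N \<inter> \<sigma> ` carrier H"
    then obtain z where z: "z \<in> carrier H" "t = \<sigma> z" "\<sigma> z \<in> N"
      by auto
    then have "g z = g \<one>\<^bsub>H\<^esub>"
      using lift[OF z(1)] subgroup.rcos_const[OF N is_group z(3)] hom_one[OF g_hom \<open>group H\<close>]
        factorgroup_is_group
      by simp
    then have "z = \<one>\<^bsub>H\<^esub>"
      using z(1) g_inj group.is_monoid[OF \<open>group H\<close>] by (metis inj_onD monoid.one_closed)
    then show "t \<in> {\<one>}"
      using z hom_one[OF \<sigma> \<open>group H\<close> is_group] by simp
  qed
  show "N <#> \<sigma> ` carrier H = carrier G"
  proof
    show "N <#> \<sigma> ` carrier H \<subseteq> carrier G"
      using N \<sigma> by (auto simp: set_mult_def hom_def dest: subgroup.mem_carrier)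
    show "carrier G \<subseteq> N <#> \<sigma> ` carrier H"
    proof
      fix x assume x: "x \<in> carrier G"
      then obtain z where z: "z \<in> carrier H" "g z = N #> x"
        using g_onto unfolding carrier_FactGroup by (metis imageE rev_image_eqI)
      then have "x \<in> N #> \<sigma> z"
        using lift[OF z(1)] rcos_self[OF x N] by simp
      then show "x \<in> N <#> \<sigma> ` carrier H"
        unfolding r_coset_def set_mult_def using z(1) by blast
    qed
  qed
qed

lemma (in comm_group) iso_DirProd_if_section:
  assumes N: "subgroup N G" and H: "group H" and g: "g \<in> iso H (G Mod N)" and \<sigma>: "\<sigma> \<in> hom H G"
    and lift: "\<And>z. z \<in> carrier H \<Longrightarrow> N #> \<sigma> z = g z"
  shows "G \<cong> G\<lparr>carrier := N\<rparr> \<times>\<times> H"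
proof -
  interpret \<sigma>: group_hom H G \<sigma>
    using H \<sigma> by (simp add: group_hom_def group_hom_axioms_def is_group)
  let ?T = "\<sigma> ` carrier H"
  have "inj_on \<sigma> (carrier H)"
  proof (rule inj_onI)
    fix z w assume z: "z \<in> carrier H" and w: "w \<in> carrier H" and "\<sigma> z = \<sigma> w"
    then have "g z = g w" using lift[OF z] lift[OF w] by simp
    with z w g show "z = w" by (auto simp: iso_def bij_betw_def dest: inj_onD)
  qed
  then have "H \<cong> G\<lparr>carrier := ?T\<rparr>"
    using iso_restrict_image[OF \<sigma>] by (force intro: is_isoI)
  then have T_iso: "G\<lparr>carrier := ?T\<rparr> \<cong> H"
    by (rule group.iso_sym[OF H])
  have "G \<cong> G\<lparr>carrier := N\<rparr> \<times>\<times> G\<lparr>carrier := ?T\<rparr>"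
    using iso_DirProd_subgroups[OF N \<sigma>.img_is_subgroup] Int_section_image[OF assms]
      set_mult_section_image[OF assms]
    by blast
  also have "\<dots> \<cong> G\<lparr>carrier := N\<rparr> \<times>\<times> H"
    using T_iso by (intro group.DirProd_iso_trans subgroup_imp_group N) simp_all
  finally show ?thesis .
qed

lemma (in group) FactGroup_hom_FactGroup:
  assumes H: "H \<lhd> G" and K: "K \<lhd> G" and "H \<subseteq> K"
  obtains \<rho> where "group_hom (G Mod H) (G Mod K) \<rho>"
    and "(G Mod H)\<lparr>carrier := kernel (G Mod H) (G Mod K) \<rho>\<rparr> = G\<lparr>carrier := K\<rparr> Mod H"
proof -
  interpret H: normal H G by fact
  interpret K: normal K G by fact
  have "K #> x = K #> y" if "x \<in> carrier G" "y \<in> carrier G" "H #> x = H #> y" for x y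
  proof -
    have "y \<in> H #> x" using that by (simp add: repr_independenceD H.subgroup_axioms)
    then have "y \<in> K #> x" using \<open>H \<subseteq> K\<close> by (auto simp: r_coset_def)
    then show ?thesis using repr_independence[OF _ that(1) K.subgroup_axioms] by blast
  qed
  then obtain \<rho> where \<rho>: "\<rho> \<in> hom (G Mod H) (G Mod K)" and \<rho>_coset: "\<And>x. x \<in> carrier G \<Longrightarrow> \<rho> (H #> x) = K #> x"
    using FactGroup_universal[OF K.r_coset_hom_Mod H] by metis
  have K_coset: "K #> x = K \<longleftrightarrow> x \<in> K" if "x \<in> carrier G" for x
    using coset_join1[OF _ that K.subgroup_axioms] coset_join2[OF that K.subgroup_axioms] by blast
  have "{c \<in> (#>) H ` carrier G. \<rho> c = K} = (#>) H ` K"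
  proof (intro equalityI subsetI)
    fix c assume "c \<in> {c \<in> (#>) H ` carrier G. \<rho> c = K}"
    then obtain x where "x \<in> carrier G" "c = H #> x" "K #> x = K"
      using \<rho>_coset by auto
    then show "c \<in> (#>) H ` K" using K_coset by blast
  next
    fix c assume "c \<in> (#>) H ` K"
    then obtain x where "x \<in> K" "c = H #> x" by blast
    then show "c \<in> {c \<in> (#>) H ` carrier G. \<rho> c = K}"
      using K.subset K_coset \<rho>_coset by auto
  qed
  then have "kernel (G Mod H) (G Mod K) \<rho> = carrier (G\<lparr>carrier := K\<rparr> Mod H)"
    by (simp add: kernel_def carrier_FactGroup)
  then have "(G Mod H)\<lparr>carrier := kernel (G Mod H) (G Mod K) \<rho>\<rparr> = G\<lparr>carrier := K\<rparr> Mod H"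
    by (simp add: FactGroup_def set_mult_restrict_carrier)
  moreover have "group_hom (G Mod H) (G Mod K) \<rho>"
    using \<rho> by (simp add: group_hom_def group_hom_axioms_def H.factorgroup_is_group K.factorgroup_is_group)
  ultimately show thesis
    using that by blast
qed

section \<open>Free abelian groups\<close>

lemma hom_free_Abelian_group_diff:
  assumes "group H" "h \<in> hom (free_Abelian_group S) H"
    and "Poly_Mapping.keys a \<subseteq> S" "Poly_Mapping.keys b \<subseteq> S"
  shows "h (a - b) = h a \<otimes>\<^bsub>H\<^esub> inv\<^bsub>H\<^esub> h b"
proof -
  interpret group_hom "free_Abelian_group S" H h
    using assms by (simp add: group_hom_def group_hom_axioms_def)
  have "a - b = a \<otimes>\<^bsub>free_Abelian_group S\<^esub> inv\<^bsub>free_Abelian_group S\<^esub> b"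
    using assms by simp
  also have "h \<dots> = h a \<otimes>\<^bsub>H\<^esub> inv\<^bsub>H\<^esub> h b"
    using assms by (metis hom_mult hom_inv G.inv_closed carrier_free_Abelian_group_iff)
  finally show ?thesis .
qed

lemma hom_free_Abelian_group_eqI:
  assumes "group H" and f: "f \<in> hom (free_Abelian_group S) H" and g: "g \<in> hom (free_Abelian_group S) H"
    and eq: "\<And>s. s \<in> S \<Longrightarrow> f (frag_of s) = g (frag_of s)"
    and x: "x \<in> carrier (free_Abelian_group S)"
  shows "f x = g x"
proof -
  have "Poly_Mapping.keys x \<subseteq> S" using x by simp
  then show ?thesis
  proof (rule free_Abelian_group_induct)
    show "f 0 = g 0"
      using hom_one[OF f group_free_Abelian_group \<open>group H\<close>] hom_one[OF g group_free_Abelian_group \<open>group H\<close>]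
      by simp
  qed (simp_all add: hom_free_Abelian_group_diff[OF \<open>group H\<close> f] hom_free_Abelian_group_diff[OF \<open>group H\<close> g] eq)
qed

lemma restrict_free_Abelian_group:
  "(free_Abelian_group S)\<lparr>carrier := carrier (free_Abelian_group T)\<rparr> = free_Abelian_group T"
  by (simp add: free_Abelian_group_def)

lemma subgroup_free_Abelian_group:
  assumes "T \<subseteq> S"
  shows "subgroup (carrier (free_Abelian_group T)) (free_Abelian_group S)"
  using assms by (intro group.group_incl_imp_subgroup) (auto simp: restrict_free_Abelian_group)

lemma DirProd_free_Abelian_group_iso:
  fixes X :: "'a set" and Y :: "'b set"
  shows "free_Abelian_group X \<times>\<times> free_Abelian_group Y \<cong> free_Abelian_group (X <+> Y)"
proof -
  let ?F = "free_Abelian_group (X <+> Y)"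
  let ?X = "Inl ` X :: ('a + 'b) set" and ?Y = "Inr ` Y :: ('a + 'b) set"
  let ?A = "carrier (free_Abelian_group ?X)" and ?B = "carrier (free_Abelian_group ?Y)"
  have "subgroup ?A ?F" "subgroup ?B ?F"
    by (auto intro: subgroup_free_Abelian_group)
  moreover have "?A \<inter> ?B \<subseteq> {\<one>\<^bsub>?F\<^esub>}"
    by (fastforce simp flip: keys_eq_empty)
  moreover have "?A <#>\<^bsub>?F\<^esub> ?B = carrier ?F"
  proof
    show "?A <#>\<^bsub>?F\<^esub> ?B \<subseteq> carrier ?F"
      using keys_add by (fastforce simp: set_mult_def Plus_def)
    show "carrier ?F \<subseteq> ?A <#>\<^bsub>?F\<^esub> ?B"
    proof
      fix c assume "c \<in> carrier ?F"
      then have "Poly_Mapping.keys c \<subseteq> ?X \<union> ?Y" by (simp add: Plus_def)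
      then obtain d e where "Poly_Mapping.keys d \<subseteq> ?X" "Poly_Mapping.keys e \<subseteq> ?Y" "d + e = c"
        by (rule frag_split)
      then show "c \<in> ?A <#>\<^bsub>?F\<^esub> ?B" unfolding set_mult_def by force
    qed
  qed
  ultimately have "?F \<cong> ?F\<lparr>carrier := ?A\<rparr> \<times>\<times> ?F\<lparr>carrier := ?B\<rparr>"
    by (rule comm_group.iso_DirProd_subgroups[OF abelian_free_Abelian_group])
  then have "?F \<cong> free_Abelian_group ?X \<times>\<times> free_Abelian_group ?Y"
    by (simp only: restrict_free_Abelian_group)
  then have internal: "free_Abelian_group ?X \<times>\<times> free_Abelian_group ?Y \<cong> ?F"
    by (rule group.iso_sym[OF group_free_Abelian_group])
  have "free_Abelian_group X \<times>\<times> free_Abelian_group Y \<cong> free_Abelian_group ?X \<times>\<times> free_Abelian_group ?Y"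
    using eqpoll_sym[OF inj_on_image_eqpoll_self[of Inl X]] eqpoll_sym[OF inj_on_image_eqpoll_self[of Inr Y]]
    by (intro group.DirProd_iso_trans) (simp_all add: isomorphic_free_Abelian_groups)
  then show ?thesis using internal by (rule iso_trans)
qed

lemma free_abelianI:
  fixes A :: "('c, 'd) monoid_scheme" and Z :: "'z set"
  assumes "group A" and "A \<cong> free_Abelian_group Z"
  shows "free_abelian A"
proof -
  \<comment> \<open>\<open>free_abelian\<close> wants a basis inside the carrier type of \<open>A\<close>: transport \<open>Z\<close> there along the isomorphism.\<close>
  obtain h where h: "h \<in> iso (free_Abelian_group Z) A"
    using group.iso_sym[OF assms] by (auto simp: is_iso_def)
  have "inj_on h (carrier (free_Abelian_group Z))"
    using h by (simp add: iso_def bij_betw_def)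
  then have "inj_on (h \<circ> frag_of) Z"
    unfolding inj_on_def comp_def by (metis frag_of_eq frag_of_in_free_Abelian_group)
  then have "Z \<approx> (h \<circ> frag_of) ` Z"
    by (rule eqpoll_sym[OF inj_on_image_eqpoll_self])
  then have "free_Abelian_group Z \<cong> free_Abelian_group ((h \<circ> frag_of) ` Z)"
    by (simp add: isomorphic_free_Abelian_groups)
  with assms(2) show ?thesis
    unfolding free_abelian_def by (blast intro: iso_trans)
qed

lemma free_abelian_iso:
  assumes "group A" and "A \<cong> A'" and "free_abelian A'"
  shows "free_abelian A"
  using assms by (metis free_abelian_def free_abelianI iso_trans)

lemma free_abelian_trivial_group:
  fixes A :: "('c, 'd) monoid_scheme"
  assumes "trivial_group A"
  shows "free_abelian A"
proof -
  have "(\<lambda>_. 0) \<in> iso A (free_Abelian_group ({} :: 'c set))"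
    using assms by (auto simp: trivial_group_def iso_def hom_def bij_betw_def inj_on_def)
  then show ?thesis
    using assms by (auto simp: trivial_group_def intro: free_abelianI is_isoI)
qed

lemma (in comm_group) FactGroup_hom_lift:
  assumes N: "subgroup N G" and g: "g \<in> hom (free_Abelian_group Y) (G Mod N)"
  obtains s where "s \<in> hom (free_Abelian_group Y) G"
    and "\<And>z. z \<in> carrier (free_Abelian_group Y) \<Longrightarrow> N #> s z = g z"
proof -
  interpret normal N G using N by (simp add: normal_iff_subgroup)
  have "\<forall>y\<in>Y. \<exists>a \<in> carrier G. g (frag_of y) = N #> a"
    using hom_in_carrier[OF g, of "frag_of _"] by (simp add: carrier_FactGroup image_iff)
  then obtain r where r: "\<And>y. y \<in> Y \<Longrightarrow> r y \<in> carrier G \<and> g (frag_of y) = N #> r y"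
    by metis
  obtain s where s: "s \<in> hom (free_Abelian_group Y) G" and s_frag: "\<And>y. y \<in> Y \<Longrightarrow> s (frag_of y) = r y"
    using free_Abelian_group_universal[of r Y] r by blast
  have "N #> s z = g z" if "z \<in> carrier (free_Abelian_group Y)" for z
    using hom_free_Abelian_group_eqI[OF factorgroup_is_group Group.hom_compose[OF s r_coset_hom_Mod] g _ that]
    by (simp add: s_frag r)
  with s show thesis by (rule that)
qed

lemma (in comm_group) iso_DirProd_if_free_FactGroup:
  assumes N: "subgroup N G" and iso: "G Mod N \<cong> free_Abelian_group Y"
  shows "G \<cong> G\<lparr>carrier := N\<rparr> \<times>\<times> free_Abelian_group Y"
proof -
  interpret normal N G using N by (simp add: normal_iff_subgroup)
  obtain g where g: "g \<in> iso (free_Abelian_group Y) (G Mod N)"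
    using group.iso_sym[OF factorgroup_is_group iso] by (auto simp: is_iso_def)
  then obtain \<sigma> where \<sigma>: "\<sigma> \<in> hom (free_Abelian_group Y) G"
    and lift: "\<And>z. z \<in> carrier (free_Abelian_group Y) \<Longrightarrow> N #> \<sigma> z = g z"
    using FactGroup_hom_lift[OF N] by (metis iso_imp_homomorphism)
  show ?thesis
    using iso_DirProd_if_section[OF N group_free_Abelian_group g \<sigma> lift] .
qed

lemma (in comm_group) free_abelian_extension:
  assumes N: "subgroup N G"
    and free_N: "free_abelian (G\<lparr>carrier := N\<rparr>)" and free_quotient: "free_abelian (G Mod N)"
  shows "free_abelian G"
proof -
  obtain X :: "'a set" where X: "G\<lparr>carrier := N\<rparr> \<cong> free_Abelian_group X"
    using free_N by (auto simp: free_abelian_def)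
  obtain Y :: "'a set set" where Y: "G Mod N \<cong> free_Abelian_group Y"
    using free_quotient by (auto simp: free_abelian_def)
  have "G \<cong> G\<lparr>carrier := N\<rparr> \<times>\<times> free_Abelian_group Y"
    using N Y by (rule iso_DirProd_if_free_FactGroup)
  also have "\<dots> \<cong> free_Abelian_group X \<times>\<times> free_Abelian_group Y"
    using X by (intro group.DirProd_iso_trans subgroup_imp_group N iso_refl)
  also have "\<dots> \<cong> free_Abelian_group (X <+> Y)"
    by (rule DirProd_free_Abelian_group_iso)
  finally show ?thesis
    by (rule free_abelianI[OF is_group])
qed

section \<open>Aleph-one-free groups\<close>

lemma aleph1_free_inj_hom:
  assumes "group A" and "group B" and "aleph1_free B"
    and h: "h \<in> hom A B" and inj: "inj_on h (carrier A)"
  shows "aleph1_free A"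
  unfolding aleph1_free_def
proof (intro allI impI)
  fix S assume S: "subgroup S A \<and> countable S"
  interpret h: group_hom A B h
    using assms by (simp add: group_hom_def group_hom_axioms_def)
  have "S \<subseteq> carrier A" using S subgroup.subset by blast
  then have "A\<lparr>carrier := S\<rparr> \<cong> B\<lparr>carrier := h ` S\<rparr>"
    using iso_restrict_image[OF h inj_on_subset[OF inj]] by (blast intro: is_isoI)
  moreover have "free_abelian (B\<lparr>carrier := h ` S\<rparr>)"
    using \<open>aleph1_free B\<close> S h.subgroup_img_is_subgroup by (simp add: aleph1_free_def)
  ultimately show "free_abelian (A\<lparr>carrier := S\<rparr>)"
    using S group.subgroup_imp_group[OF \<open>group A\<close>] free_abelian_iso by blast
qed

lemma free_abelian_if_aleph1_free_countable:
  assumes "group A" and "aleph1_free A" and "countable (carrier A)"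
  shows "free_abelian A"
proof -
  have "free_abelian (A\<lparr>carrier := carrier A\<rparr>)"
    using assms group.subgroup_self unfolding aleph1_free_def by blast
  then show ?thesis by simp
qed

lemma (in group_hom) aleph1_free_FactGroup_kernel:
  assumes "aleph1_free H"
  shows "aleph1_free (G Mod kernel G H h)"
  using aleph1_free_inj_hom[OF normal.factorgroup_is_group[OF normal_kernel] H.is_group assms
      FactGroup_hom FactGroup_inj_on] .

lemma aleph1_free_extension:
  assumes "comm_group A" and h: "group_hom A B h" and free_B: "aleph1_free B"
    and free_kernel: "aleph1_free (A\<lparr>carrier := kernel A B h\<rparr>)"
  shows "aleph1_free A"
  unfolding aleph1_free_def
proof (intro allI impI)
  interpret A: comm_group A by fact
  interpret h: group_hom A B h by fact
  fix S assume "subgroup S A \<and> countable S"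
  then have S: "subgroup S A" and "countable S" by auto
  \<comment> \<open>\<open>S\<close> is an extension of its intersection with the kernel by a group embedding in \<open>B\<close>.\<close>
  let ?A\<^sub>S = "A\<lparr>carrier := S\<rparr>" and ?K = "kernel (A\<lparr>carrier := S\<rparr>) B h"
  have "comm_group ?A\<^sub>S"
    using S by (rule A.comm_group_restrict)
  have h\<^sub>S: "group_hom ?A\<^sub>S B h"
    using S by (rule h.group_hom_restrict)
  have K: "?K = S \<inter> kernel A B h"
    using subgroup.subset[OF S] by (auto simp: kernel_def)
  have "free_abelian (?A\<^sub>S Mod ?K)"
  proof (rule free_abelian_if_aleph1_free_countable)
    show "group (?A\<^sub>S Mod ?K)"
      using group_hom.normal_kernel[OF h\<^sub>S] by (rule normal.factorgroup_is_group)
    show "aleph1_free (?A\<^sub>S Mod ?K)"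
      using group_hom.aleph1_free_FactGroup_kernel[OF h\<^sub>S free_B] .
    show "countable (carrier (?A\<^sub>S Mod ?K))"
      using \<open>countable S\<close> by (simp add: carrier_FactGroup)
  qed
  moreover have "free_abelian (?A\<^sub>S\<lparr>carrier := ?K\<rparr>)"
  proof -
    have "subgroup ?K A"
      using A.incl_subgroup[OF S group_hom.subgroup_kernel[OF h\<^sub>S]] .
    then have "subgroup ?K (A\<lparr>carrier := kernel A B h\<rparr>)"
      using A.subgroup_incl h.subgroup_kernel K by blast
    moreover have "countable ?K"
      using \<open>countable S\<close> K by (simp add: countable_subset)
    ultimately show ?thesis
      using free_kernel by (simp add: aleph1_free_def)
  qed
  ultimately show "free_abelian ?A\<^sub>S"
    using comm_group.free_abelian_extension[OF \<open>comm_group ?A\<^sub>S\<close> group_hom.subgroup_kernel[OF h\<^sub>S]] by blast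
qed

lemma (in comm_group) aleph1_free_FactGroup_trans:
  assumes H: "subgroup H G" and K: "subgroup K G" and "H \<subseteq> K"
    and free_GK: "aleph1_free (G Mod K)" and free_KH: "aleph1_free (G\<lparr>carrier := K\<rparr> Mod H)"
  shows "aleph1_free (G Mod H)"
proof -
  obtain \<rho> where \<rho>: "group_hom (G Mod H) (G Mod K) \<rho>"
    and kernel: "(G Mod H)\<lparr>carrier := kernel (G Mod H) (G Mod K) \<rho>\<rparr> = G\<lparr>carrier := K\<rparr> Mod H"
    using FactGroup_hom_FactGroup H K \<open>H \<subseteq> K\<close> by (metis normal_iff_subgroup)
  show ?thesis
    using aleph1_free_extension[OF abelian_FactGroup[OF H] \<rho> free_GK] free_KH by (simp add: kernel)
qed

lemma aleph1_free_trivial_group: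
  assumes "trivial_group A"
  shows "aleph1_free A"
  unfolding aleph1_free_def
proof (intro allI impI)
  fix S assume "subgroup S A \<and> countable S"
  then have "trivial_group (A\<lparr>carrier := S\<rparr>)"
    using assms subgroup.subset[of S A] subgroup.one_closed[of S A]
    by (auto simp: trivial_group_def intro: group.subgroup_imp_group)
  then show "free_abelian (A\<lparr>carrier := S\<rparr>)"
    by (rule free_abelian_trivial_group)
qed

lemma (in group) trivial_group_FactGroup_self: "trivial_group (G Mod carrier G)"
  using coset_join2[OF _ subgroup_self] normal.factorgroup_is_group[OF normal_self]
  by (auto simp: trivial_group_def carrier_FactGroup)

section \<open>Partial automorphisms\<close>

lemma pinv_Some:
  assumes inj: "inj_on \<phi> (dom \<phi>)"
  shows "pinv \<phi> y = Some x \<longleftrightarrow> \<phi> x = Some y"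
proof
  assume a: "pinv \<phi> y = Some x"
  then have y: "y \<in> ran \<phi>" by (auto simp: pinv_def split: if_splits)
  then obtain x0 where x0: "\<phi> x0 = Some y" by (auto simp: ran_def)
  have u: "\<And>x'. \<phi> x' = Some y \<Longrightarrow> x' = x0" using inj x0 by (metis domI inj_onD)
  have "(THE x. \<phi> x = Some y) = x0" using x0 u by (rule the_equality)
  then show "\<phi> x = Some y" using a y x0 by (simp add: pinv_def)
next
  assume a: "\<phi> x = Some y"
  then have y: "y \<in> ran \<phi>" by (auto simp: ran_def)
  have u: "\<And>x'. \<phi> x' = Some y \<Longrightarrow> x' = x" using inj a by (metis domI inj_onD)
  have "(THE x'. \<phi> x' = Some y) = x" using a u by (rule the_equality)
  then show "pinv \<phi> y = Some x" using y by (simp add: pinv_def)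
qed

lemma dom_pinv: "dom (pinv \<phi>) = ran \<phi>"
  by (auto simp: pinv_def dom_def split: if_splits)

lemma ran_pinv:
  assumes "inj_on \<phi> (dom \<phi>)"
  shows "ran (pinv \<phi>) = dom \<phi>"
  using pinv_Some[OF assms] by (auto simp: ran_def dom_def)

lemma pcomp_Some: "pcomp \<phi> \<psi> x = Some z \<longleftrightarrow> (\<exists>y. \<phi> x = Some y \<and> \<psi> y = Some z)"
  by (auto simp: pcomp_def map_comp_def split: option.splits)

lemma dom_pcomp: "dom (pcomp \<phi> \<psi>) = {x \<in> dom \<phi>. the (\<phi> x) \<in> dom \<psi>}"
  by (auto simp: pcomp_def map_comp_def dom_def split: option.splits)

lemma dom_pcomp_eq_image:
  assumes "inj_on \<phi> (dom \<phi>)"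
  shows "dom (pcomp \<phi> \<psi>) = (\<lambda>y. the (pinv \<phi> y)) ` (ran \<phi> \<inter> dom \<psi>)"
proof (intro equalityI subsetI)
  fix x assume "x \<in> dom (pcomp \<phi> \<psi>)"
  then have "x \<in> dom \<phi>" "the (\<phi> x) \<in> dom \<psi>" by (simp_all add: dom_pcomp)
  then obtain y where y: "\<phi> x = Some y" "y \<in> dom \<psi>" by (metis domD option.sel)
  then have "pinv \<phi> y = Some x" "y \<in> ran \<phi>"
    using pinv_Some[OF assms] by (auto simp: ran_def)
  then show "x \<in> (\<lambda>y. the (pinv \<phi> y)) ` (ran \<phi> \<inter> dom \<psi>)"
    using y(2) by (intro image_eqI[of _ _ y]) simp_all
next
  fix x assume "x \<in> (\<lambda>y. the (pinv \<phi> y)) ` (ran \<phi> \<inter> dom \<psi>)"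
  then obtain y where y: "y \<in> ran \<phi>" "y \<in> dom \<psi>" and x: "x = the (pinv \<phi> y)" by blast
  from y(1) obtain x' where x': "\<phi> x' = Some y" by (auto simp: ran_def)
  then have "pinv \<phi> y = Some x'"
    using pinv_Some[OF assms] by blast
  then have "\<phi> x = Some y"
    using x x' by simp
  then show "x \<in> dom (pcomp \<phi> \<psi>)"
    using y(2) by (simp add: dom_pcomp domI)
qed

lemma ran_pcomp:
  assumes "inj_on \<phi> (dom \<phi>)" and "inj_on \<psi> (dom \<psi>)"
  shows "ran (pcomp \<phi> \<psi>) = dom (pcomp (pinv \<psi>) (pinv \<phi>))"
  using pinv_Some[OF assms(1)] pinv_Some[OF assms(2)] by (auto simp: ran_def dom_def pcomp_Some)

lemma partial_aut_group_hom:
  assumes "group G" and "partial_aut G \<phi>"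
  shows "group_hom (G\<lparr>carrier := dom \<phi>\<rparr>) G (\<lambda>x. the (\<phi> x))"
proof -
  have "subgroup (dom \<phi>) G" "subgroup (ran \<phi>) G"
    using assms(2) by (auto simp: partial_aut_def)
  then have "(\<lambda>x. the (\<phi> x)) \<in> hom (G\<lparr>carrier := dom \<phi>\<rparr>) G"
    using assms(2) by (auto simp: hom_def partial_aut_def ran_def dest: subgroup.mem_carrier)
  then show ?thesis
    using assms group.subgroup_imp_group \<open>subgroup (dom \<phi>) G\<close>
    by (simp add: group_hom_def group_hom_axioms_def)
qed

lemma partial_aut_pinv:
  assumes "partial_aut G \<phi>"
  shows "partial_aut G (pinv \<phi>)"
proof -
  have inj: "inj_on \<phi> (dom \<phi>)" using assms by (simp add: partial_aut_def)
  note pinv_eq = pinv_Some[OF inj]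
  show ?thesis unfolding partial_aut_def
  proof (intro conjI ballI)
    show "subgroup (dom (pinv \<phi>)) G" "subgroup (ran (pinv \<phi>)) G"
      using assms by (simp_all add: dom_pinv ran_pinv[OF inj] partial_aut_def)
    show "inj_on (pinv \<phi>) (dom (pinv \<phi>))"
      using pinv_eq by (fastforce intro: inj_onI)
    fix a b assume "a \<in> dom (pinv \<phi>)" "b \<in> dom (pinv \<phi>)"
    then obtain x y where x: "pinv \<phi> a = Some x" and y: "pinv \<phi> b = Some y" by auto
    then have "\<phi> x = Some a" "\<phi> y = Some b" using pinv_eq by auto
    then have "\<phi> (x \<otimes>\<^bsub>G\<^esub> y) = Some (a \<otimes>\<^bsub>G\<^esub> b)"
      using assms by (simp add: partial_aut_def domI)
    then have "pinv \<phi> (a \<otimes>\<^bsub>G\<^esub> b) = Some (x \<otimes>\<^bsub>G\<^esub> y)"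
      using pinv_eq by blast
    with x y show "pinv \<phi> (a \<otimes>\<^bsub>G\<^esub> b) = Some (the (pinv \<phi> a) \<otimes>\<^bsub>G\<^esub> the (pinv \<phi> b))"
      by simp
  qed
qed

lemma subgroup_dom_pcomp:
  assumes "group G" and \<phi>: "partial_aut G \<phi>" and \<psi>: "partial_aut G \<psi>"
  shows "subgroup (dom (pcomp \<phi> \<psi>)) G"
proof -
  interpret group G by fact
  have inj: "inj_on \<phi> (dom \<phi>)" and ran: "subgroup (ran \<phi>) G" and dom: "subgroup (dom \<psi>) G"
    using \<phi> \<psi> by (auto simp: partial_aut_def)
  interpret \<phi>_inv: group_hom "G\<lparr>carrier := ran \<phi>\<rparr>" G "\<lambda>y. the (pinv \<phi> y)"
    using partial_aut_group_hom[OF is_group partial_aut_pinv[OF \<phi>]] by (simp add: dom_pinv)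
  have "subgroup (ran \<phi> \<inter> dom \<psi>) (G\<lparr>carrier := ran \<phi>\<rparr>)"
    using subgroup_incl[OF subgroups_Inter_pair[OF ran dom] ran] by blast
  then show ?thesis
    using \<phi>_inv.subgroup_img_is_subgroup by (simp add: dom_pcomp_eq_image[OF inj])
qed

lemma partial_aut_pcomp:
  assumes "group G" and \<phi>: "partial_aut G \<phi>" and \<psi>: "partial_aut G \<psi>"
  shows "partial_aut G (pcomp \<phi> \<psi>)"
  unfolding partial_aut_def
proof (intro conjI ballI)
  have inj: "inj_on \<phi> (dom \<phi>)" "inj_on \<psi> (dom \<psi>)"
    using \<phi> \<psi> by (simp_all add: partial_aut_def)
  show "subgroup (dom (pcomp \<phi> \<psi>)) G"
    using assms by (rule subgroup_dom_pcomp)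
  show "subgroup (ran (pcomp \<phi> \<psi>)) G"
    using subgroup_dom_pcomp[OF \<open>group G\<close> partial_aut_pinv[OF \<psi>] partial_aut_pinv[OF \<phi>]]
    by (simp add: ran_pcomp[OF inj])
  show "inj_on (pcomp \<phi> \<psi>) (dom (pcomp \<phi> \<psi>))"
  proof (rule inj_onI)
    fix x x' assume "x \<in> dom (pcomp \<phi> \<psi>)" and eq: "pcomp \<phi> \<psi> x = pcomp \<phi> \<psi> x'"
    then obtain z where "pcomp \<phi> \<psi> x = Some z" "pcomp \<phi> \<psi> x' = Some z"
      by (metis domD)
    then obtain y y' where "\<phi> x = Some y" "\<psi> y = Some z" "\<phi> x' = Some y'" "\<psi> y' = Some z"
      unfolding pcomp_Some by blast
    then show "x = x'"
      using inj by (metis domI inj_onD)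
  qed
  fix x y assume "x \<in> dom (pcomp \<phi> \<psi>)" "y \<in> dom (pcomp \<phi> \<psi>)"
  then obtain b d where "pcomp \<phi> \<psi> x = Some b" "pcomp \<phi> \<psi> y = Some d"
    by (metis domD)
  then obtain a c where "\<phi> x = Some a" "\<psi> a = Some b" "\<phi> y = Some c" "\<psi> c = Some d"
    unfolding pcomp_Some by blast
  moreover from this have "\<phi> (x \<otimes>\<^bsub>G\<^esub> y) = Some (a \<otimes>\<^bsub>G\<^esub> c)" "\<psi> (a \<otimes>\<^bsub>G\<^esub> c) = Some (b \<otimes>\<^bsub>G\<^esub> d)"
    using \<phi> \<psi> by (simp_all add: partial_aut_def domI)
  ultimately show "pcomp \<phi> \<psi> (x \<otimes>\<^bsub>G\<^esub> y) = Some (the (pcomp \<phi> \<psi> x) \<otimes>\<^bsub>G\<^esub> the (pcomp \<phi> \<psi> y))"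
    by (simp add: pcomp_def)
qed

lemma (in comm_group) aleph1_free_FactGroup_dom_pcomp:
  assumes \<phi>: "partial_aut G \<phi>" and \<psi>: "partial_aut G \<psi>"
    and free_\<phi>: "aleph1_free (G Mod dom \<phi>)" and free_\<psi>: "aleph1_free (G Mod dom \<psi>)"
  shows "aleph1_free (G Mod dom (pcomp \<phi> \<psi>))"
proof -
  have dom_\<phi>: "subgroup (dom \<phi>) G" and dom_\<psi>: "subgroup (dom \<psi>) G"
    using \<phi> \<psi> by (auto simp: partial_aut_def)
  interpret \<phi>: group_hom "G\<lparr>carrier := dom \<phi>\<rparr>" G "\<lambda>x. the (\<phi> x)"
    using is_group \<phi> by (rule partial_aut_group_hom)
  interpret D: normal "dom \<psi>" G
    using dom_\<psi> by (simp add: normal_iff_subgroup)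
  let ?h = "\<lambda>x. dom \<psi> #> the (\<phi> x)"
  have h: "group_hom (G\<lparr>carrier := dom \<phi>\<rparr>) (G Mod dom \<psi>) ?h"
    using Group.hom_compose[OF \<phi>.homh D.r_coset_hom_Mod] \<phi>.G.is_group D.factorgroup_is_group
    by (simp add: group_hom_def group_hom_axioms_def comp_def)
  have "kernel (G\<lparr>carrier := dom \<phi>\<rparr>) (G Mod dom \<psi>) ?h = dom (pcomp \<phi> \<psi>)"
    unfolding kernel_def dom_pcomp
  proof (rule Collect_cong)
    fix x
    have "dom \<psi> #> a = dom \<psi> \<longleftrightarrow> a \<in> dom \<psi>" if "a \<in> carrier G" for a
      using coset_join1[OF _ that dom_\<psi>] coset_join2[OF that dom_\<psi>] by blast
    then show "x \<in> carrier (G\<lparr>carrier := dom \<phi>\<rparr>) \<and> ?h x = \<one>\<^bsub>G Mod dom \<psi>\<^esub>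
        \<longleftrightarrow> x \<in> dom \<phi> \<and> the (\<phi> x) \<in> dom \<psi>"
      using \<phi>.hom_closed[of x] by (cases "x \<in> dom \<phi>") simp_all
  qed
  then have "aleph1_free (G\<lparr>carrier := dom \<phi>\<rparr> Mod dom (pcomp \<phi> \<psi>))"
    using group_hom.aleph1_free_FactGroup_kernel[OF h free_\<psi>] by simp
  moreover have "dom (pcomp \<phi> \<psi>) \<subseteq> dom \<phi>"
    by (auto simp: dom_pcomp)
  ultimately show ?thesis
    using aleph1_free_FactGroup_trans[OF subgroup_dom_pcomp[OF is_group \<phi> \<psi>] dom_\<phi> _ free_\<phi>] by blast
qed

lemma dom_pid [simp]: "dom (pid G) = carrier G"
  and ran_pid [simp]: "ran (pid G) = carrier G"
  by (auto simp: pid_def dom_def ran_def)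

lemma dom_pneg [simp]: "dom (pneg G) = carrier G"
  by (auto simp: pneg_def dom_def)

lemma (in group) ran_pneg [simp]: "ran (pneg G) = carrier G"
proof (intro equalityI subsetI)
  fix x assume "x \<in> carrier G"
  then have "pneg G (inv x) = Some x" by (simp add: pneg_def)
  then show "x \<in> ran (pneg G)" by (auto simp: ran_def)
qed (auto simp: pneg_def ran_def split: if_splits)

lemma (in group) partial_aut_pid: "partial_aut G (pid G)"
  unfolding partial_aut_def dom_pid ran_pid by (auto simp: subgroup_self inj_on_def pid_def)

lemma (in comm_group) partial_aut_pneg: "partial_aut G (pneg G)"
  unfolding partial_aut_def dom_pneg ran_pneg
  by (auto simp: subgroup_self inj_on_def pneg_def inv_mult) (metis inv_inv)

lemma (in group) pid_in_pAut: "pid G \<in> pAut G"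
  using aleph1_free_trivial_group[OF trivial_group_FactGroup_self] partial_aut_pid
  by (simp add: pAut_def)

lemma (in comm_group) pneg_in_pAut: "pneg G \<in> pAut G"
  using aleph1_free_trivial_group[OF trivial_group_FactGroup_self] partial_aut_pneg
  by (simp add: pAut_def)

lemma pinv_in_pAut:
  assumes "\<phi> \<in> pAut G"
  shows "pinv \<phi> \<in> pAut G"
  using assms partial_aut_pinv by (auto simp: pAut_def partial_aut_def dom_pinv ran_pinv)

lemma (in comm_group) pcomp_in_pAut:
  assumes "\<phi> \<in> pAut G" and "\<psi> \<in> pAut G"
  shows "pcomp \<phi> \<psi> \<in> pAut G"
proof -
  have \<phi>: "partial_aut G \<phi>" and \<psi>: "partial_aut G \<psi>"
    and free: "aleph1_free (G Mod dom \<phi>)" "aleph1_free (G Mod ran \<phi>)"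
      "aleph1_free (G Mod dom \<psi>)" "aleph1_free (G Mod ran \<psi>)"
    using assms by (simp_all add: pAut_def)
  have "aleph1_free (G Mod dom (pcomp \<phi> \<psi>))"
    using \<phi> \<psi> free(1,3) by (rule aleph1_free_FactGroup_dom_pcomp)
  moreover have "aleph1_free (G Mod dom (pcomp (pinv \<psi>) (pinv \<phi>)))"
    using partial_aut_pinv[OF \<psi>] partial_aut_pinv[OF \<phi>] free
    by (intro aleph1_free_FactGroup_dom_pcomp) (simp_all add: dom_pinv)
  ultimately show ?thesis
    using \<phi> \<psi> partial_aut_pcomp[OF is_group \<phi> \<psi>]
    by (simp add: pAut_def ran_pcomp partial_aut_def)
qed

theorem lemma3p1:
  fixes G :: "('a, 'b) monoid_scheme"
  assumes "comm_group G"
  shows "pAut G \<subseteq> {\<phi>. partial_aut G \<phi>}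
    \<and> (\<forall>\<phi>\<in>pAut G. \<forall>\<psi>\<in>pAut G. pcomp \<phi> \<psi> \<in> pAut G)
    \<and> pid G \<in> pAut G
    \<and> pneg G \<in> pAut G
    \<and> (\<forall>\<phi>\<in>pAut G. pinv \<phi> \<in> pAut G)"
proof -
  interpret comm_group G by fact
  show ?thesis
    using pcomp_in_pAut pid_in_pAut pneg_in_pAut pinv_in_pAut by (auto simp: pAut_def)
qed

end
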